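(* Let $\mathbf{k}$ be a field and let $\mathfrak{B}=\mathbf{k}\langle g,x\rangle$ be the free algebra on $g,x$, made into a bialgebra by $\Delta(g)=g\otimes g$, $\Delta(x)=x\otimes 1+g\otimes x$, $\varepsilon(g)=1$, $\varepsilon(x)=0$. For integers $k,l\ge 0$ let $C_{k,l}$ be the sum of all monomials in $g,x$ containing exactly $k$ letters $g$ and $l$ letters $x$ (so $C_{0,0}=1$), and set $C_{k,l}=0$ if $k<0$ or $l<0$. Then for all integers $i,j\ge0$ and $n\ge1$, \[ (g^ix^j)^{[n+1]}=\sum_{\substack{k_1,\dots,k_n\ge 0\\ k_1+\cdots+k_n\le j}} g^iC_{k_1+\cdots+k_n,\,j-(k_1+\cdots+k_n)}\,g^iC_{k_1+\cdots+k_{n-1},\,k_n}\cdots g^iC_{k_1,k_2}\,g^iC_{0,k_1}. \]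
   Context: For an element $h$ of a bialgebra with multiplication $m$ and comultiplication $\Delta$, the $m$-th Sweedler power is $h^{[m]}=m^{(m)}\circ\Delta^{(m)}(h)$ for $m\ge1$, where $\Delta^{(1)}=\mathrm{id}$, $\Delta^{(m)}=(\Delta^{(m-1)}\otimes\mathrm{id})\circ\Delta$ for $m\ge2$, and $m^{(m)}(h_1\otimes\cdots\otimes h_m)=h_1\cdots h_m$. *)

theory Defs
  imports "HOL-Library.Poly_Mapping"
begin

text \<open>The m-fold tensor power
  B^{(x)m} has basis the m-tuples of monomials, represented as word lists of length m.\<close>

datatype letter = G | X

type_synonym word = "letter list"
type_synonym 'k fa = "word \<Rightarrow>\<^sub>0 'k"
type_synonym 'k tens = "word list \<Rightarrow>\<^sub>0 'k"

definition fa_mult :: "'k::comm_ring_1 fa \<Rightarrow> 'k fa \<Rightarrow> 'k fa" where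
  "fa_mult p q = (\<Sum>u\<in>Poly_Mapping.keys p. \<Sum>v\<in>Poly_Mapping.keys q.
      Poly_Mapping.single (u @ v) (Poly_Mapping.lookup p u * Poly_Mapping.lookup q v))"

definition fa_one :: "'k::comm_ring_1 fa" where
  "fa_one = Poly_Mapping.single [] 1"

definition fa_mono :: "word \<Rightarrow> 'k::comm_ring_1 fa" where
  "fa_mono w = Poly_Mapping.single w 1"

definition fa_gen :: "letter \<Rightarrow> 'k::comm_ring_1 fa" where
  "fa_gen a = Poly_Mapping.single [a] 1"

definition fa_pow :: "'k::comm_ring_1 fa \<Rightarrow> nat \<Rightarrow> 'k fa" where
  "fa_pow p n = (fa_mult p ^^ n) fa_one"

definition fa_prod_list :: "'k::comm_ring_1 fa list \<Rightarrow> 'k fa" where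
  "fa_prod_list ps = foldr fa_mult ps fa_one"

definition tens_mult :: "'k::comm_ring_1 tens \<Rightarrow> 'k tens \<Rightarrow> 'k tens" where
  "tens_mult s t = (\<Sum>u\<in>Poly_Mapping.keys s. \<Sum>v\<in>Poly_Mapping.keys t.
      Poly_Mapping.single (map2 (@) u v) (Poly_Mapping.lookup s u * Poly_Mapping.lookup t v))"

definition tens_one :: "nat \<Rightarrow> 'k::comm_ring_1 tens" where
  "tens_one m = Poly_Mapping.single (replicate m []) 1"

fun Delta_gen :: "letter \<Rightarrow> 'k::comm_ring_1 tens" where
  "Delta_gen G = Poly_Mapping.single [[G],[G]] 1"
| "Delta_gen X = Poly_Mapping.single [[X],[]] 1 + Poly_Mapping.single [[G],[X]] 1"

definition Delta_word :: "word \<Rightarrow> 'k::comm_ring_1 tens" where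
  "Delta_word w = foldr (\<lambda>a acc. tens_mult (Delta_gen a) acc) w (tens_one 2)"

definition Delta :: "'k::comm_ring_1 fa \<Rightarrow> 'k tens" where
  "Delta h = (\<Sum>w\<in>Poly_Mapping.keys h. \<Sum>u\<in>Poly_Mapping.keys (Delta_word w :: 'k tens).
      Poly_Mapping.single u (Poly_Mapping.lookup h w * Poly_Mapping.lookup (Delta_word w) u))"

text \<open>Iterated comultiplication Delta^(1) = id, Delta^(m) = (Delta^(m-1) (x) id) o Delta.
  (Delta^(0) is not used; it is set to 0.)\<close>
fun Delta_iter :: "nat \<Rightarrow> 'k::comm_ring_1 fa \<Rightarrow> 'k tens" where
  "Delta_iter 0 h = 0"
| "Delta_iter (Suc 0) h = (\<Sum>w\<in>Poly_Mapping.keys h. Poly_Mapping.single [w] (Poly_Mapping.lookup h w))"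
| "Delta_iter (Suc (Suc m)) h =
     (\<Sum>u\<in>Poly_Mapping.keys (Delta h). \<Sum>v\<in>Poly_Mapping.keys (Delta_iter (Suc m) (fa_mono (u ! 0))).
        Poly_Mapping.single (v @ [u ! 1])
          (Poly_Mapping.lookup (Delta h) u * Poly_Mapping.lookup (Delta_iter (Suc m) (fa_mono (u ! 0))) v))"

definition mult_iter :: "'k::comm_ring_1 tens \<Rightarrow> 'k fa" where
  "mult_iter t = (\<Sum>v\<in>Poly_Mapping.keys t. Poly_Mapping.single (concat v) (Poly_Mapping.lookup t v))"

definition sweedler :: "nat \<Rightarrow> 'k::comm_ring_1 fa \<Rightarrow> 'k fa" where
  "sweedler m h = mult_iter (Delta_iter m h)"

definition Cs :: "nat \<Rightarrow> nat \<Rightarrow> 'k::comm_ring_1 fa" where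
  "Cs k l = (\<Sum>w\<in>{w. count_list w G = k \<and> count_list w X = l}. Poly_Mapping.single w 1)"

end

theory Submission
  imports Defs
begin

text \<open>
  Since \<open>\<Delta>(g) = g \<otimes> g\<close> and \<open>\<Delta>(x) = x \<otimes> 1 + g \<otimes> x\<close>, a term of the \<open>(n+1)\<close>-fold
  coproduct of a monomial is obtained by copying every \<open>g\<close> into all tensor factors and sending
  every \<open>x\<close> to one factor \<open>p \<in> {0..n}\<close>, where it stays \<open>x\<close>; in the factors before \<open>p\<close> it
  becomes \<open>g\<close> and in those after \<open>p\<close> it disappears. For \<open>g\<^sup>i x\<^sup>j\<close> the terms are therefore
  indexed by the maps \<open>qs\<close> from the \<open>j\<close> letters \<open>x\<close> to \<open>{0..n}\<close>, and factor \<open>q\<close> is \<open>g\<^sup>i w\<^sub>q\<close>,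
  where \<open>w\<^sub>q\<close> has one \<open>x\<close> for each letter sent to \<open>q\<close> and one \<open>g\<close> for each letter sent beyond
  \<open>q\<close>. With \<open>k\<^sub>t\<close> the number of letters sent to factor \<open>n + 1 - t\<close>, the word \<open>w\<^sub>q\<close> is thus a
  monomial of the \<open>C\<close> in the corresponding factor of the right-hand side. Conversely every
  tuple of words with these letter counts arises from exactly one \<open>qs\<close>: the \<open>x\<close>'s of \<open>w\<^sub>0\<close> are
  the letters sent to \<open>0\<close>, and its \<open>g\<close>'s, in order, are the remaining letters, whose targets are
  read off recursively from \<open>w\<^sub>1, \<dots>, w\<^sub>n\<close>. So both sides are the same sum of monomials.
\<close>

lemma set_Cons_eq_image: "set_Cons A XS = (\<lambda>(x, xs). x # xs) ` (A \<times> XS)"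
  by (auto simp: set_Cons_def)

lemma bij_betw_Cons_set_Cons: "bij_betw (\<lambda>(x, xs). x # xs) (A \<times> XS) (set_Cons A XS)"
  by (auto simp: bij_betw_def inj_on_def set_Cons_eq_image)

lemma in_listset_iff: "xs \<in> listset As \<longleftrightarrow> list_all2 (\<in>) xs As"
  by (induction As arbitrary: xs) (auto simp: set_Cons_def list_all2_Cons2)

lemma in_listset_map_iff:
  "xs \<in> listset (map S ts) \<longleftrightarrow> length xs = length ts \<and> (\<forall>k<length ts. xs ! k \<in> S (ts ! k))"
  by (auto simp: in_listset_iff list_all2_conv_all_nth)

lemma finite_listset: "(\<And>A. A \<in> set As \<Longrightarrow> finite A) \<Longrightarrow> finite (listset As)"
  by (induction As) (auto simp: set_Cons_eq_image)

lemma listset_append: "listset (As @ Bs) = (\<lambda>(xs, ys). xs @ ys) ` (listset As \<times> listset Bs)"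
  by (auto simp: in_listset_iff list_all2_append2 image_iff Bex_def; blast dest: list_all2_lengthD)

lemma listset_replicate: "listset (replicate n A) = {xs. length xs = n \<and> set xs \<subseteq> A}"
  by (auto simp: in_listset_iff list_all2_conv_all_nth in_set_conv_nth) (use nth_mem in blast)

section \<open>Formal sums\<close>

text \<open>The elements \<open>f c\<close> need not be distinct; coinciding ones add up.\<close>

definition formal_sum :: "'c set \<Rightarrow> ('c \<Rightarrow> 'a) \<Rightarrow> 'a \<Rightarrow>\<^sub>0 'k::comm_ring_1" where
  "formal_sum C f = (\<Sum>c\<in>C. Poly_Mapping.single (f c) 1)"

lemma sum_keys_formal_sum:
  fixes f :: "'c \<Rightarrow> 'a" and \<phi> :: "'a \<Rightarrow> 'k::comm_ring_1 \<Rightarrow> 'b::comm_monoid_add"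
  assumes fin: "finite C"
    and add: "\<And>u a b. \<phi> u (a + b) = \<phi> u a + \<phi> u b" and zero: "\<And>u. \<phi> u 0 = 0"
  shows "(\<Sum>u\<in>Poly_Mapping.keys (formal_sum C f :: 'a \<Rightarrow>\<^sub>0 'k). \<phi> u (Poly_Mapping.lookup (formal_sum C f) u))
       = (\<Sum>c\<in>C. \<phi> (f c) 1)"
proof -
  let ?p = "formal_sum C f :: 'a \<Rightarrow>\<^sub>0 'k"
  let ?fibre = "\<lambda>u. {c\<in>C. f c = u}"
  have \<phi>_sum: "\<phi> u (sum \<beta> B) = (\<Sum>c\<in>B. \<phi> u (\<beta> c))" for u \<beta> and B :: "'c set"
    by (induction B rule: infinite_finite_induct) (simp_all add: add zero)
  have lookup_p: "Poly_Mapping.lookup ?p u = (\<Sum>c\<in>?fibre u. 1)" for u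
    using fin by (simp add: formal_sum_def lookup_sum lookup_single when_def sum.inter_filter[symmetric])
  have "Poly_Mapping.keys ?p \<subseteq> f ` C"
  proof
    fix u assume "u \<in> Poly_Mapping.keys ?p"
    then have "?fibre u \<noteq> {}" by (metis in_keys_iff lookup_p sum.empty)
    then show "u \<in> f ` C" by auto
  qed
  then have "(\<Sum>u\<in>Poly_Mapping.keys ?p. \<phi> u (Poly_Mapping.lookup ?p u)) = (\<Sum>u\<in>f ` C. \<phi> u (Poly_Mapping.lookup ?p u))"
    by (intro sum.mono_neutral_left) (use fin zero in \<open>auto simp: in_keys_iff\<close>)
  also have "\<dots> = (\<Sum>u\<in>f ` C. \<Sum>c\<in>?fibre u. \<phi> u 1)"
    by (simp only: lookup_p \<phi>_sum)
  also have "\<dots> = (\<Sum>u\<in>f ` C. \<Sum>c\<in>?fibre u. \<phi> (f c) 1)"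
    by (intro sum.cong) auto
  also have "\<dots> = (\<Sum>c\<in>C. \<phi> (f c) 1)"
    using sum.image_gen[OF fin, of "\<lambda>c. \<phi> (f c) 1" f] by simp
  finally show ?thesis .
qed

lemma sum_keys_single_formal_sum:
  "finite C \<Longrightarrow>
   (\<Sum>u\<in>Poly_Mapping.keys (formal_sum C f :: _ \<Rightarrow>\<^sub>0 'k::comm_ring_1).
      Poly_Mapping.single (h u) (Poly_Mapping.lookup (formal_sum C f :: _ \<Rightarrow>\<^sub>0 'k) u))
   = formal_sum C (\<lambda>c. h (f c))"
  by (subst sum_keys_formal_sum) (simp_all add: single_add formal_sum_def)

lemma sum_keys_pair_formal_sum:
  fixes f :: "'c \<Rightarrow> 'a" and g :: "'d \<Rightarrow> 'b"
  assumes "finite C" "finite D"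
  shows "(\<Sum>u\<in>Poly_Mapping.keys (formal_sum C f :: 'a \<Rightarrow>\<^sub>0 'k::comm_ring_1).
           \<Sum>v\<in>Poly_Mapping.keys (formal_sum D g :: 'b \<Rightarrow>\<^sub>0 'k).
             Poly_Mapping.single (h u v)
               (Poly_Mapping.lookup (formal_sum C f :: 'a \<Rightarrow>\<^sub>0 'k) u
                * Poly_Mapping.lookup (formal_sum D g :: 'b \<Rightarrow>\<^sub>0 'k) v))
       = formal_sum (C \<times> D) (\<lambda>(c, d). h (f c) (g d))"
proof -
  let ?q = "formal_sum D g :: 'b \<Rightarrow>\<^sub>0 'k"
  have "(\<Sum>u\<in>Poly_Mapping.keys (formal_sum C f :: 'a \<Rightarrow>\<^sub>0 'k). \<Sum>v\<in>Poly_Mapping.keys ?q.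
           Poly_Mapping.single (h u v) (Poly_Mapping.lookup (formal_sum C f) u * Poly_Mapping.lookup ?q v))
      = (\<Sum>c\<in>C. \<Sum>v\<in>Poly_Mapping.keys ?q. Poly_Mapping.single (h (f c) v) (1 * Poly_Mapping.lookup ?q v))"
    by (rule sum_keys_formal_sum[OF assms(1), where \<phi> = "\<lambda>u a. \<Sum>v\<in>Poly_Mapping.keys ?q.
          Poly_Mapping.single (h u v) (a * Poly_Mapping.lookup ?q v)"])
      (simp_all add: single_add distrib_right sum.distrib)
  also have "\<dots> = (\<Sum>c\<in>C. formal_sum D (\<lambda>d. h (f c) (g d)))"
    using assms(2) by (simp add: sum_keys_single_formal_sum)
  also have "\<dots> = formal_sum (C \<times> D) (\<lambda>(c, d). h (f c) (g d))"
    by (simp add: formal_sum_def sum.cartesian_product split_def)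
  finally show ?thesis .
qed

lemma formal_sum_reindex: "bij_betw h C D \<Longrightarrow> formal_sum D f = formal_sum C (\<lambda>c. f (h c))"
  unfolding formal_sum_def by (rule sum.reindex_bij_betw[symmetric])

lemma formal_sum_cong: "(\<And>c. c \<in> C \<Longrightarrow> f c = g c) \<Longrightarrow> formal_sum C f = formal_sum C g"
  by (simp add: formal_sum_def)

lemma sum_formal_sum_Sigma:
  "finite C \<Longrightarrow> (\<And>c. c \<in> C \<Longrightarrow> finite (D c)) \<Longrightarrow>
   (\<Sum>c\<in>C. formal_sum (D c) (f c)) = formal_sum (Sigma C D) (\<lambda>(c, d). f c d)"
  by (simp add: formal_sum_def sum.Sigma split_def)

lemma fa_mult_formal_sum:
  "finite C \<Longrightarrow> finite D \<Longrightarrow>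
   fa_mult (formal_sum C f) (formal_sum D g) = formal_sum (C \<times> D) (\<lambda>(c, d). f c @ g d)"
  unfolding fa_mult_def by (rule sum_keys_pair_formal_sum)

lemma tens_mult_formal_sum:
  "finite C \<Longrightarrow> finite D \<Longrightarrow>
   tens_mult (formal_sum C f) (formal_sum D g) = formal_sum (C \<times> D) (\<lambda>(c, d). map2 (@) (f c) (g d))"
  unfolding tens_mult_def by (rule sum_keys_pair_formal_sum)

lemma mult_iter_formal_sum:
  "finite C \<Longrightarrow> mult_iter (formal_sum C f) = formal_sum C (\<lambda>c. concat (f c))"
  unfolding mult_iter_def by (rule sum_keys_single_formal_sum)

lemma fa_mono_eq_formal_sum: "fa_mono w = formal_sum {w} id"
  by (simp add: fa_mono_def formal_sum_def)

lemma fa_mult_fa_mono: "fa_mult (fa_mono u) (fa_mono v) = (fa_mono (u @ v) :: 'k::comm_ring_1 fa)"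
  by (simp add: fa_mono_eq_formal_sum fa_mult_formal_sum) (simp add: formal_sum_def)

lemma fa_pow_fa_gen: "fa_pow (fa_gen a) i = (fa_mono (replicate i a) :: 'k::comm_ring_1 fa)"
proof (induction i)
  case 0 then show ?case by (simp add: fa_pow_def fa_one_def fa_mono_def)
next
  case (Suc i)
  have "fa_gen a = (fa_mono [a] :: 'k fa)" by (simp add: fa_gen_def fa_mono_def)
  with Suc show ?case by (simp add: fa_pow_def fa_mult_fa_mono)
qed

lemma fa_prod_list_formal_sum:
  assumes "\<And>t. t \<in> set ts \<Longrightarrow> finite (S t)"
  shows "fa_prod_list (map (\<lambda>t. formal_sum (S t) f) ts)
       = (formal_sum (listset (map S ts)) (\<lambda>ws. concat (map f ws)) :: 'k::comm_ring_1 fa)"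
  using assms
proof (induction ts)
  case Nil then show ?case by (simp add: fa_prod_list_def fa_one_def formal_sum_def)
next
  case (Cons t ts)
  have fin: "finite (S t)" "finite (listset (map S ts))"
    using Cons.prems by (auto intro!: finite_listset)
  have "fa_prod_list (map (\<lambda>t. formal_sum (S t) f) (t # ts))
      = fa_mult (formal_sum (S t) f) (formal_sum (listset (map S ts)) (\<lambda>ws. concat (map f ws)) :: 'k fa)"
    using Cons by (simp add: fa_prod_list_def)
  also have "\<dots> = formal_sum (S t \<times> listset (map S ts)) (\<lambda>(w, ws). f w @ concat (map f ws))"
    using fin by (rule fa_mult_formal_sum)
  also have "\<dots> = formal_sum (listset (map S (t # ts))) (\<lambda>ws. concat (map f ws))"
    by (simp add: formal_sum_reindex[OF bij_betw_Cons_set_Cons] split_def)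
  finally show ?case .
qed

section \<open>Iterated coproduct of a word\<close>

text \<open>\<open>letter_part q a p\<close> is the contribution to tensor factor \<open>q\<close> of a letter \<open>a\<close> whose \<open>x\<close> is
  sent to factor \<open>p\<close>; a letter \<open>g\<close> is only ever given the dummy target \<open>0\<close>.\<close>

fun letter_part :: "nat \<Rightarrow> letter \<Rightarrow> nat \<Rightarrow> word" where
  "letter_part q G p = [G]"
| "letter_part q X p = (if q < p then [G] else if q = p then [X] else [])"

fun slots :: "nat \<Rightarrow> letter \<Rightarrow> nat set" where
  "slots m G = {0}"
| "slots m X = {..m}"

definition placements :: "nat \<Rightarrow> word \<Rightarrow> nat list set" where
  "placements m w = listset (map (slots m) w)"

definition coprod_term :: "nat \<Rightarrow> word \<Rightarrow> nat list \<Rightarrow> word list" where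
  "coprod_term m w ps = map (\<lambda>q. concat (map2 (letter_part q) w ps)) [0..<Suc m]"

definition front_word :: "word \<Rightarrow> nat list \<Rightarrow> word" where
  "front_word w ps = map2 (\<lambda>a p. if a = X \<and> p = 0 then X else G) w ps"

lemma letter_neq_iff: "a \<noteq> X \<longleftrightarrow> a = G" "a \<noteq> G \<longleftrightarrow> a = X"
  by (cases a; simp)+

lemma in_slots_iff: "p \<in> slots m a \<longleftrightarrow> p \<le> m \<and> (a = G \<longrightarrow> p = 0)"
  by (cases a) auto

lemma finite_slots: "finite (slots m a)"
  by (cases a) auto

lemma finite_placements: "finite (placements m w)"
  by (auto simp: placements_def finite_slots intro!: finite_listset)

lemma placements_Cons: "placements m (a # w) = set_Cons (slots m a) (placements m w)"
  by (simp add: placements_def)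

lemma in_placements_iff:
  "ps \<in> placements m w \<longleftrightarrow>
     length ps = length w \<and> (\<forall>k<length w. ps ! k \<le> m \<and> (w ! k = G \<longrightarrow> ps ! k = 0))"
  by (simp add: placements_def in_listset_map_iff in_slots_iff)

lemma placements_0: "placements 0 w = {replicate (length w) 0}"
  by (auto simp: in_placements_iff intro: nth_equalityI)

lemma coprod_term_Cons:
  "coprod_term m (a # w) (p # ps) = map2 (@) (map (\<lambda>q. letter_part q a p) [0..<Suc m]) (coprod_term m w ps)"
  unfolding coprod_term_def by (rule nth_equalityI) (simp_all del: upt_Suc)

lemma coprod_term_nth_0: "coprod_term m w ps ! 0 = front_word w ps"
proof -
  have "concat (map2 (letter_part 0) w ps) = front_word w ps"
  proof (induction w arbitrary: ps)
    case (Cons a w)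
    then show ?case by (cases ps; cases a) (simp_all add: front_word_def)
  qed (simp add: front_word_def)
  then show ?thesis by (simp add: coprod_term_def del: upt_Suc)
qed

lemma Delta_gen_eq_formal_sum:
  "Delta_gen a = formal_sum (slots 1 a) (\<lambda>p. map (\<lambda>q. letter_part q a p) [0..<2])"
proof (cases a)
  case X
  have "{..1::nat} = {0, 1}" by auto
  with X show ?thesis by (simp add: formal_sum_def upt_rec add.commute)
qed (simp add: formal_sum_def upt_rec)

lemma Delta_word_eq_formal_sum:
  "(Delta_word w :: 'k::comm_ring_1 tens) = formal_sum (placements 1 w) (coprod_term 1 w)"
proof (induction w)
  case Nil
  show ?case by (simp add: Delta_word_def tens_one_def placements_def coprod_term_def formal_sum_def
        numeral_2_eq_2)
next
  case (Cons a w)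
  have "Delta_word (a # w) = (tens_mult (Delta_gen a) (Delta_word w) :: 'k tens)"
    by (simp add: Delta_word_def)
  also have "\<dots> = formal_sum (slots 1 a \<times> placements 1 w)
      (\<lambda>(p, ps). map2 (@) (map (\<lambda>q. letter_part q a p) [0..<2]) (coprod_term 1 w ps))"
    unfolding Cons.IH Delta_gen_eq_formal_sum
    by (rule tens_mult_formal_sum[OF finite_slots finite_placements])
  also have "\<dots> = formal_sum (placements 1 (a # w)) (coprod_term 1 (a # w))"
    by (simp add: placements_Cons formal_sum_reindex[OF bij_betw_Cons_set_Cons] split_def
        coprod_term_Cons numeral_2_eq_2)
  finally show ?case .
qed

lemma Delta_fa_mono: "Delta (fa_mono w) = formal_sum (placements 1 w) (coprod_term 1 w)"
  by (simp add: Delta_def fa_mono_def Delta_word_eq_formal_sum sum_keys_single_formal_sum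
      finite_placements)

lemma Delta_iter_Suc_Suc_formal_sum:
  fixes h :: "'k::comm_ring_1 fa"
  assumes Delta_h: "Delta h = formal_sum C f" and "finite C"
    and IH: "\<And>c. c \<in> C \<Longrightarrow> Delta_iter (Suc m) (fa_mono (f c ! 0) :: 'k fa) = formal_sum (D c) (F c)"
    and fin: "\<And>c. c \<in> C \<Longrightarrow> finite (D c)"
  shows "Delta_iter (Suc (Suc m)) h = formal_sum (Sigma C D) (\<lambda>(c, d). F c d @ [f c ! 1])"
proof -
  let ?DI = "\<lambda>u. Delta_iter (Suc m) (fa_mono (u ! 0)) :: 'k tens"
  have "Delta_iter (Suc (Suc m)) h
      = (\<Sum>c\<in>C. \<Sum>v\<in>Poly_Mapping.keys (?DI (f c)).
           Poly_Mapping.single (v @ [f c ! 1]) (1 * Poly_Mapping.lookup (?DI (f c)) v))"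
    unfolding Delta_iter.simps Delta_h
    by (rule sum_keys_formal_sum[OF \<open>finite C\<close>, where \<phi> = "\<lambda>u a. \<Sum>v\<in>Poly_Mapping.keys (?DI u).
          Poly_Mapping.single (v @ [u ! 1]) (a * Poly_Mapping.lookup (?DI u) v)"])
      (simp_all add: single_add distrib_right sum.distrib)
  also have "\<dots> = (\<Sum>c\<in>C. formal_sum (D c) (\<lambda>d. F c d @ [f c ! 1]))"
    by (intro sum.cong refl) (simp add: IH fin sum_keys_single_formal_sum)
  also have "\<dots> = formal_sum (Sigma C D) (\<lambda>(c, d). F c d @ [f c ! 1])"
    using \<open>finite C\<close> fin by (rule sum_formal_sum_Sigma)
  finally show ?thesis .
qed

text \<open>In \<open>\<Delta>\<^bsup>(m+2)\<^esup> = (\<Delta>\<^bsup>(m+1)\<^esup> \<otimes> id) \<circ> \<Delta>\<close> the letters that \<open>\<Delta>\<close> sends to its second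
  factor end up in the last factor \<open>m + 1\<close>; the others are placed by \<open>\<Delta>\<^bsup>(m+1)\<^esup>\<close>.\<close>

definition merge_placements :: "nat \<Rightarrow> nat list \<Rightarrow> nat list \<Rightarrow> nat list" where
  "merge_placements m ps qs = map2 (\<lambda>p q. if p = 1 then Suc m else q) ps qs"

lemma coprod_term_merge_placements:
  assumes "ps \<in> placements 1 w" and "qs \<in> placements m (front_word w ps)"
  shows "coprod_term (Suc m) w (merge_placements m ps qs)
       = coprod_term m (front_word w ps) qs @ [coprod_term 1 w ps ! 1]"
proof -
  have len: "length ps = length w" "length qs = length w"
    and slot: "\<And>k. k < length w \<Longrightarrow> ps ! k \<le> 1 \<and> (w ! k = G \<longrightarrow> ps ! k = 0) \<and> qs ! k \<le> m
      \<and> (front_word w ps ! k = G \<longrightarrow> qs ! k = 0)"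
    using assms by (auto simp: in_placements_iff front_word_def)
  have front: "map2 (letter_part q) w (merge_placements m ps qs) = map2 (letter_part q) (front_word w ps) qs"
    if "q \<le> m" for q
  proof (rule nth_equalityI)
    fix k assume "k < length (map2 (letter_part q) w (merge_placements m ps qs))"
    then have "k < length w" by (simp add: merge_placements_def)
    with slot[OF this] len that show "map2 (letter_part q) w (merge_placements m ps qs) ! k
        = map2 (letter_part q) (front_word w ps) qs ! k"
      by (cases "w ! k"; cases "ps ! k") (auto simp: merge_placements_def front_word_def)
  qed (simp add: len merge_placements_def front_word_def)
  have last: "map2 (letter_part (Suc m)) w (merge_placements m ps qs) = map2 (letter_part 1) w ps"
  proof (rule nth_equalityI)
    fix k assume "k < length (map2 (letter_part (Suc m)) w (merge_placements m ps qs))"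
    then have "k < length w" by (simp add: merge_placements_def)
    with slot[OF this] len show "map2 (letter_part (Suc m)) w (merge_placements m ps qs) ! k
        = map2 (letter_part 1) w ps ! k"
      by (cases "w ! k"; cases "ps ! k") (auto simp: merge_placements_def front_word_def)
  qed (simp add: len merge_placements_def)
  show ?thesis
    using front last by (simp add: coprod_term_def)
qed

definition split_placement :: "nat \<Rightarrow> nat list \<Rightarrow> nat list \<times> nat list" where
  "split_placement m rs = (map (\<lambda>r. if r = Suc m then 1 else 0) rs, map (\<lambda>r. if r = Suc m then 0 else r) rs)"

lemma bij_betw_merge_placements:
  "bij_betw (\<lambda>(ps, qs). merge_placements m ps qs)
     (Sigma (placements 1 w) (\<lambda>ps. placements m (front_word w ps))) (placements (Suc m) w)"
proof (rule bij_betw_byWitness[where f' = "split_placement m"])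
  let ?S = "Sigma (placements 1 w) (\<lambda>ps. placements m (front_word w ps))"
  have char: "(ps, qs) \<in> ?S \<longleftrightarrow> length ps = length w \<and> length qs = length w \<and>
      (\<forall>k<length w. ps ! k \<le> 1 \<and> (w ! k = G \<longrightarrow> ps ! k = 0) \<and> qs ! k \<le> m
        \<and> ((w ! k = G \<or> ps ! k \<noteq> 0) \<longrightarrow> qs ! k = 0))" for ps qs
    by (auto simp: in_placements_iff front_word_def letter_neq_iff)
  show "\<forall>x\<in>?S. split_placement m ((\<lambda>(ps, qs). merge_placements m ps qs) x) = x"
  proof
    fix x assume "x \<in> ?S"
    moreover obtain ps qs where x: "x = (ps, qs)" by fastforce
    ultimately have "(ps, qs) \<in> ?S" by simp
    with x show "split_placement m ((\<lambda>(ps, qs). merge_placements m ps qs) x) = x"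
      unfolding char by (auto simp: split_placement_def merge_placements_def list_eq_iff_nth_eq)
  qed
  show "(\<lambda>(ps, qs). merge_placements m ps qs) ` ?S \<subseteq> placements (Suc m) w"
  proof (rule image_subsetI)
    fix x assume "x \<in> ?S"
    moreover obtain ps qs where x: "x = (ps, qs)" by fastforce
    ultimately have "(ps, qs) \<in> ?S" by simp
    with x show "(\<lambda>(ps, qs). merge_placements m ps qs) x \<in> placements (Suc m) w"
      unfolding char by (force simp: in_placements_iff merge_placements_def)
  qed
  show "\<forall>rs\<in>placements (Suc m) w. (\<lambda>(ps, qs). merge_placements m ps qs) (split_placement m rs) = rs"
    by (auto simp: in_placements_iff split_placement_def merge_placements_def list_eq_iff_nth_eq)
  show "split_placement m ` placements (Suc m) w \<subseteq> ?S"
  proof (rule image_subsetI)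
    fix rs assume "rs \<in> placements (Suc m) w"
    then show "split_placement m rs \<in> ?S"
      unfolding split_placement_def char by (auto simp: in_placements_iff)
  qed
qed

lemma Delta_iter_fa_mono:
  "(Delta_iter (Suc m) (fa_mono w) :: 'k::comm_ring_1 tens) = formal_sum (placements m w) (coprod_term m w)"
proof (induction m arbitrary: w)
  case 0
  have "coprod_term 0 w ps = [front_word w ps]" for ps
    using coprod_term_nth_0[of 0 w ps] by (simp add: coprod_term_def)
  moreover have "front_word w (replicate (length w) 0) = w"
    by (simp add: front_word_def list_eq_iff_nth_eq letter_neq_iff)
  ultimately show ?case by (simp add: fa_mono_def placements_0 formal_sum_def)
next
  case (Suc m)
  have "(Delta_iter (Suc (Suc m)) (fa_mono w) :: 'k tens)
      = formal_sum (Sigma (placements 1 w) (\<lambda>ps. placements m (front_word w ps)))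
          (\<lambda>(ps, qs). coprod_term m (front_word w ps) qs @ [coprod_term 1 w ps ! 1])"
    by (rule Delta_iter_Suc_Suc_formal_sum[OF Delta_fa_mono finite_placements])
      (simp_all add: Suc.IH coprod_term_nth_0 finite_placements)
  also have "\<dots> = formal_sum (placements (Suc m) w) (coprod_term (Suc m) w)"
    by (subst formal_sum_reindex[OF bij_betw_merge_placements])
      (auto intro: formal_sum_cong simp: coprod_term_merge_placements)
  finally show ?case .
qed

section \<open>Sweedler powers of \<open>g\<^sup>i x\<^sup>j\<close>\<close>

definition factor_word :: "nat \<Rightarrow> nat list \<Rightarrow> word" where
  "factor_word q qs = concat (map (letter_part q X) qs)"

definition factor_words :: "nat \<Rightarrow> nat list \<Rightarrow> word list" where
  "factor_words n qs = map (\<lambda>q. factor_word q qs) [0..<Suc n]"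

lemma placements_monomial:
  "placements n (replicate i G @ replicate j X)
     = (\<lambda>qs. replicate i 0 @ qs) ` {qs. length qs = j \<and> set qs \<subseteq> {..n}}"
proof -
  have rep0: "listset (replicate i {0::nat}) = {replicate i 0}"
    by (auto simp: listset_replicate intro: replicate_eqI)
  show ?thesis
    unfolding placements_def map_append map_replicate slots.simps listset_append rep0
    by (auto simp: listset_replicate)
qed

lemma coprod_term_monomial:
  "coprod_term n (replicate i G @ replicate (length qs) X) (replicate i 0 @ qs)
     = map (\<lambda>w. replicate i G @ w) (factor_words n qs)"
proof -
  have "map2 f (replicate i a @ replicate (length qs) b) (replicate i 0 @ qs)
      = replicate i (f a 0) @ map (f b) qs" for f :: "letter \<Rightarrow> nat \<Rightarrow> word" and a b
    by (simp add: zip_append zip_replicate1)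
  moreover have "concat (replicate i [G]) = replicate i G"
    by (induction i) simp_all
  ultimately show ?thesis
    by (simp add: coprod_term_def factor_words_def factor_word_def del: upt_Suc)
qed

lemma sweedler_monomial:
  "sweedler (Suc n) (fa_mono (replicate i G @ replicate j X))
     = (formal_sum {qs. length qs = j \<and> set qs \<subseteq> {..n}}
          (\<lambda>qs. concat (map (\<lambda>w. replicate i G @ w) (factor_words n qs))) :: 'k::comm_ring_1 fa)"
proof -
  have bij: "bij_betw (\<lambda>qs. replicate i 0 @ qs) {qs. length qs = j \<and> set qs \<subseteq> {..n}}
      (placements n (replicate i G @ replicate j X))"
    unfolding placements_monomial by (rule inj_on_imp_bij_betw) (simp add: inj_on_def)
  have "sweedler (Suc n) (fa_mono (replicate i G @ replicate j X))
      = (formal_sum (placements n (replicate i G @ replicate j X))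
           (\<lambda>ps. concat (coprod_term n (replicate i G @ replicate j X) ps)) :: 'k fa)"
    by (simp add: sweedler_def Delta_iter_fa_mono mult_iter_formal_sum finite_placements)
  also have "\<dots> = formal_sum {qs. length qs = j \<and> set qs \<subseteq> {..n}}
      (\<lambda>qs. concat (coprod_term n (replicate i G @ replicate j X) (replicate i 0 @ qs)))"
    by (rule formal_sum_reindex[OF bij])
  also have "\<dots> = formal_sum {qs. length qs = j \<and> set qs \<subseteq> {..n}}
      (\<lambda>qs. concat (map (\<lambda>w. replicate i G @ w) (factor_words n qs)))"
    by (rule formal_sum_cong) (metis (mono_tags) coprod_term_monomial mem_Collect_eq)
  finally show ?thesis .
qed

section \<open>Monomial expansion of the right-hand side\<close>

definition words_with_counts :: "nat \<Rightarrow> nat \<Rightarrow> word set" where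
  "words_with_counts k l = {w. count_list w G = k \<and> count_list w X = l}"

lemma length_eq_count_G_X: "length w = count_list w G + count_list w X"
  by (induction w) (auto simp: letter_neq_iff)

lemma finite_words_with_counts: "finite (words_with_counts k l)"
proof (rule finite_subset)
  show "words_with_counts k l \<subseteq> {w. set w \<subseteq> UNIV \<and> length w = k + l}"
    by (auto simp: words_with_counts_def length_eq_count_G_X)
  have "(UNIV :: letter set) = {G, X}"
    using letter_neq_iff by auto
  then have "finite (UNIV :: letter set)"
    by (metis finite.emptyI finite_insert)
  then show "finite {w::word. set w \<subseteq> UNIV \<and> length w = k + l}"
    by (rule finite_lists_length_eq)
qed

lemma fa_mult_fa_pow_G_Cs:
  "fa_mult (fa_pow (fa_gen G) i) (Cs k l)
     = (formal_sum (words_with_counts k l) (\<lambda>w. replicate i G @ w) :: 'k::comm_ring_1 fa)"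
proof -
  have "Cs k l = (formal_sum (words_with_counts k l) id :: 'k fa)"
    by (simp add: Cs_def formal_sum_def words_with_counts_def)
  moreover have "bij_betw (Pair (replicate i G)) (words_with_counts k l)
      ({replicate i G} \<times> words_with_counts k l)"
    by (auto simp: bij_betw_def inj_on_def)
  ultimately show ?thesis
    by (simp add: fa_pow_fa_gen fa_mono_eq_formal_sum fa_mult_formal_sum finite_words_with_counts
        formal_sum_reindex)
qed

definition Cs_words :: "nat \<Rightarrow> nat list \<Rightarrow> nat \<Rightarrow> word set" where
  "Cs_words j ks t = words_with_counts (sum_list (take t ks)) ((ks @ [j - sum_list ks]) ! t)"

lemma finite_Cs_words: "finite (Cs_words j ks t)"
  by (simp add: Cs_words_def finite_words_with_counts)

lemma finite_length_sum_list_le: "finite {ks::nat list. length ks = n \<and> sum_list ks \<le> j}"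
proof (rule finite_subset)
  show "{ks::nat list. length ks = n \<and> sum_list ks \<le> j} \<subseteq> {ks. set ks \<subseteq> {..j} \<and> length ks = n}"
    using member_le_sum_list by fastforce
qed (rule finite_lists_length_eq, simp)

definition Cs_expansion_index :: "nat \<Rightarrow> nat \<Rightarrow> (nat list \<times> word list) set" where
  "Cs_expansion_index n j =
     (SIGMA ks:{ks. length ks = n \<and> sum_list ks \<le> j}. listset (map (Cs_words j ks) (rev [0..<Suc n])))"

lemma sum_fa_prod_list_Cs_eq_formal_sum:
  "(\<Sum>ks\<in>{ks. length ks = n \<and> sum_list ks \<le> j}.
      fa_prod_list (map (\<lambda>t. fa_mult (fa_pow (fa_gen G) i)
        (Cs (sum_list (take t ks)) ((ks @ [j - sum_list ks]) ! t))) (rev [0..<Suc n])))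
   = (formal_sum (Cs_expansion_index n j) (\<lambda>(ks, ws). concat (map (\<lambda>w. replicate i G @ w) ws)) :: 'k::comm_ring_1 fa)"
proof -
  have "fa_prod_list (map (\<lambda>t. fa_mult (fa_pow (fa_gen G) i)
        (Cs (sum_list (take t ks)) ((ks @ [j - sum_list ks]) ! t))) (rev [0..<Suc n]))
      = (formal_sum (listset (map (Cs_words j ks) (rev [0..<Suc n])))
          (\<lambda>ws. concat (map (\<lambda>w. replicate i G @ w) ws)) :: 'k fa)" for ks
    unfolding fa_mult_fa_pow_G_Cs Cs_words_def[symmetric]
    by (rule fa_prod_list_formal_sum) (rule finite_Cs_words)
  then show ?thesis
    unfolding Cs_expansion_index_def by (simp del: upt_Suc, intro sum_formal_sum_Sigma)
      (auto simp: finite_length_sum_list_le finite_Cs_words intro!: finite_listset simp del: upt_Suc)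
qed

section \<open>Decoding a tuple of factor words\<close>

definition x_counts :: "nat \<Rightarrow> nat list \<Rightarrow> nat list" where
  "x_counts n qs = map (\<lambda>t. count_list qs (n - t)) [0..<n]"

definition shift_placement :: "nat list \<Rightarrow> nat list" where
  "shift_placement qs = map (\<lambda>p. p - 1) (filter (\<lambda>p. 0 < p) qs)"

text \<open>The third clause (a \<open>g\<close> with no target left) is junk and never used.\<close>

fun fill_placement :: "word \<Rightarrow> nat list \<Rightarrow> nat list" where
  "fill_placement [] ys = []"
| "fill_placement (X # w) ys = 0 # fill_placement w ys"
| "fill_placement (G # w) [] = 0 # fill_placement w []"
| "fill_placement (G # w) (y # ys) = Suc y # fill_placement w ys"

text \<open>The \<open>x\<close>'s of the first factor word are the letters sent to \<open>0\<close>; its \<open>g\<close>'s are, in order,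
  the letters sent further, whose targets (shifted down by one) are decoded from the other words.\<close>

fun decode_placement :: "word list \<Rightarrow> nat list" where
  "decode_placement [] = []"
| "decode_placement (w # ws) = fill_placement w (decode_placement ws)"

lemma length_x_counts [simp]: "length (x_counts n qs) = n"
  by (simp add: x_counts_def)

lemma factor_word_Nil [simp]: "factor_word q [] = []"
  by (simp add: factor_word_def)

lemma factor_word_Cons [simp]: "factor_word q (p # qs) = letter_part q X p @ factor_word q qs"
  by (simp add: factor_word_def)

lemma factor_word_Suc: "factor_word (Suc q) qs = factor_word q (shift_placement qs)"
  by (induction qs) (auto simp: shift_placement_def)

lemma nth_factor_words: "q \<le> n \<Longrightarrow> factor_words n qs ! q = factor_word q qs"
  using nth_upt[of 0 q "Suc n"] by (simp add: factor_words_def del: upt_Suc)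

lemma factor_words_Suc: "factor_words (Suc n) qs = factor_word 0 qs # factor_words n (shift_placement qs)"
  unfolding factor_words_def
  by (simp only: upt_conv_Cons[of 0 "Suc (Suc n)"] map_Suc_upt[symmetric])
    (simp add: factor_word_Suc del: upt_Suc)

lemma fill_placement_factor_word: "fill_placement (factor_word 0 qs) (shift_placement qs) = qs"
  by (induction qs) (auto simp: shift_placement_def)

lemma factor_word_fill_placement:
  "count_list w G = length ys \<Longrightarrow>
   factor_word 0 (fill_placement w ys) = w \<and> shift_placement (fill_placement w ys) = ys"
  by (induction w ys rule: fill_placement.induct) (auto simp: shift_placement_def)

lemma length_fill_placement: "length (fill_placement w ys) = length w"
  by (induction w ys rule: fill_placement.induct) auto

lemma set_decode_placement: "set (decode_placement ws) \<subseteq> {..<length ws}"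
proof (induction ws)
  case (Cons w ws)
  have "set (fill_placement w ys) \<subseteq> insert 0 (Suc ` set ys)" for ys
    by (induction w ys rule: fill_placement.induct) auto
  with Cons show ?case by force
qed simp

lemma decode_placement_factor_words: "set qs \<subseteq> {..n} \<Longrightarrow> decode_placement (factor_words n qs) = qs"
proof (induction n arbitrary: qs)
  case 0
  then have "shift_placement qs = []" by (auto simp: shift_placement_def filter_empty_conv)
  then show ?case using fill_placement_factor_word[of qs] by (simp add: factor_words_def)
next
  case (Suc n)
  have "set (shift_placement qs) \<subseteq> {..n}" using Suc.prems by (auto simp: shift_placement_def)
  then show ?case using Suc.IH fill_placement_factor_word[of qs] by (simp add: factor_words_Suc)
qed

lemma factor_words_decode_placement:
  "length ws = Suc n \<Longrightarrow> (\<forall>q<n. count_list (ws ! q) G = length (ws ! Suc q)) \<Longrightarrow>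
   count_list (ws ! n) G = 0 \<Longrightarrow> factor_words n (decode_placement ws) = ws"
proof (induction n arbitrary: ws)
  case 0
  then obtain w where "ws = [w]" by (cases ws) auto
  with 0 show ?case using factor_word_fill_placement[of w "[]"] by (simp add: factor_words_def)
next
  case (Suc n)
  then obtain w v rest where ws: "ws = w # v # rest" by (metis Suc_length_conv)
  have "count_list w G = length (decode_placement (v # rest))"
    using Suc.prems(2) ws by (auto simp: length_fill_placement dest: spec[of _ 0])
  moreover have "factor_words n (decode_placement (v # rest)) = v # rest"
    by (rule Suc.IH) (use Suc.prems ws in \<open>auto dest: spec[of _ "Suc q" for q]\<close>)
  ultimately show ?case using factor_word_fill_placement ws by (simp add: factor_words_Suc)
qed

lemma count_factor_word_X: "count_list (factor_word q qs) X = count_list qs q"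
  by (induction qs) auto

lemma count_factor_word_G: "count_list (factor_word q qs) G = length (filter ((<) q) qs)"
  by (induction qs) auto

lemma length_filter_less_Suc:
  "length (filter ((<) q) qs) = length (filter ((<) (Suc q)) qs) + count_list qs (Suc q)"
  by (induction qs) auto

lemma length_eq_filter_pos_count_0: "length qs = length (filter ((<) 0) qs) + count_list qs (0::nat)"
  by (induction qs) auto

lemma sum_take_x_counts:
  assumes "set qs \<subseteq> {..n}" and "t \<le> n"
  shows "sum_list (take t (x_counts n qs)) = length (filter ((<) (n - t)) qs)"
  using \<open>t \<le> n\<close>
proof (induction t)
  case 0
  from assms(1) show ?case by (auto simp: filter_empty_conv)
next
  case (Suc t)
  have "take (Suc t) (x_counts n qs) = take t (x_counts n qs) @ [count_list qs (n - t)]"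
    using Suc.prems by (simp add: x_counts_def take_Suc_conv_app_nth)
  moreover have "Suc (n - Suc t) = n - t" using Suc.prems by simp
  ultimately show ?case
    using Suc length_filter_less_Suc[of "n - Suc t" qs] by simp
qed

lemma x_counts_factor_words_in_Cs_expansion_index:
  assumes "length qs = j" and "set qs \<subseteq> {..n}"
  shows "(x_counts n qs, factor_words n qs) \<in> Cs_expansion_index n j"
proof -
  let ?ks = "x_counts n qs"
  have sum_ks: "sum_list ?ks = length (filter ((<) 0) qs)"
    using sum_take_x_counts[OF assms(2), of n] by (simp add: x_counts_def)
  have "factor_word q qs \<in> Cs_words j ?ks (n - q)" if "q \<le> n" for q
  proof -
    have "count_list (factor_word q qs) X = (?ks @ [j - sum_list ?ks]) ! (n - q)"
      using that assms(1) sum_ks length_eq_filter_pos_count_0[of qs]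
      by (cases "q = 0") (simp_all add: count_factor_word_X nth_append x_counts_def)
    with that show ?thesis
      by (simp add: Cs_words_def words_with_counts_def count_factor_word_G sum_take_x_counts[OF assms(2)])
  qed
  moreover have "sum_list ?ks \<le> j"
    using sum_ks assms(1) length_filter_le[of "(<) 0" qs] by simp
  ultimately show ?thesis
    by (simp add: Cs_expansion_index_def in_listset_map_iff factor_words_def rev_nth del: upt_Suc)
qed

lemma decode_placement_Cs_expansion_index:
  assumes "(ks, ws) \<in> Cs_expansion_index n j"
  shows "factor_words n (decode_placement ws) = ws" and "length (decode_placement ws) = j"
    and "set (decode_placement ws) \<subseteq> {..n}" and "x_counts n (decode_placement ws) = ks"
proof -
  have ks: "length ks = n" "sum_list ks \<le> j" and lw: "length ws = Suc n"
    and wq: "\<And>q. q \<le> n \<Longrightarrow> ws ! q \<in> Cs_words j ks (n - q)"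
    using assms by (auto simp: Cs_expansion_index_def in_listset_map_iff rev_nth simp del: upt_Suc)
  have cG: "count_list (ws ! q) G = sum_list (take (n - q) ks)"
    and cX: "count_list (ws ! q) X = (ks @ [j - sum_list ks]) ! (n - q)" if "q \<le> n" for q
    using wq[OF that] by (simp_all add: Cs_words_def words_with_counts_def)
  have "count_list (ws ! q) G = length (ws ! Suc q)" if "q < n" for q
  proof -
    have "n - q = Suc (n - Suc q)" using that by simp
    then show ?thesis
      using cG[of q] cG[of "Suc q"] cX[of "Suc q"] that ks(1)
      by (simp add: length_eq_count_G_X nth_append take_Suc_conv_app_nth)
  qed
  then show decode: "factor_words n (decode_placement ws) = ws"
    using factor_words_decode_placement[OF lw] cG[of n] by simp
  obtain w rest where ws: "ws = w # rest" using lw by (cases ws) auto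
  then show "length (decode_placement ws) = j"
    using cG[of 0] cX[of 0] ks by (simp add: length_fill_placement length_eq_count_G_X nth_append)
  show "set (decode_placement ws) \<subseteq> {..n}"
    using set_decode_placement[of ws] lw by auto
  have "count_list (decode_placement ws) (n - t) = ks ! t" if "t < n" for t
  proof -
    have "count_list (decode_placement ws) (n - t) = count_list (ws ! (n - t)) X"
      using arg_cong[OF decode, of "\<lambda>vs. vs ! (n - t)"]
      by (simp add: nth_factor_words) (metis count_factor_word_X)
    with cX[of "n - t"] that ks show ?thesis by (simp add: nth_append)
  qed
  then show "x_counts n (decode_placement ws) = ks"
    using ks by (simp add: x_counts_def list_eq_iff_nth_eq)
qed

lemma bij_betw_x_counts_factor_words:
  "bij_betw (\<lambda>qs. (x_counts n qs, factor_words n qs)) {qs. length qs = j \<and> set qs \<subseteq> {..n}}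
     (Cs_expansion_index n j)"
  by (rule bij_betw_byWitness[where f' = "\<lambda>(ks, ws). decode_placement ws"])
    (auto simp: decode_placement_factor_words x_counts_factor_words_in_Cs_expansion_index
      decode_placement_Cs_expansion_index dest: decode_placement_Cs_expansion_index(3)[THEN subsetD])

theorem lemma2p11:
  fixes i j n :: nat
  assumes "n \<ge> 1"
  shows "sweedler (n + 1)
           (fa_mult (fa_pow (fa_gen G) i) (fa_pow (fa_gen X) j) :: 'k::field fa)
       = (\<Sum>ks\<in>{ks. length ks = n \<and> sum_list ks \<le> j}.
            fa_prod_list
              (map (\<lambda>t. fa_mult (fa_pow (fa_gen G) i)
                          (Cs (sum_list (take t ks)) ((ks @ [j - sum_list ks]) ! t)))
                   (rev [0..<n + 1])))"
proof -
  have monomial: "fa_mult (fa_pow (fa_gen G) i) (fa_pow (fa_gen X) j)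
      = (fa_mono (replicate i G @ replicate j X) :: 'k fa)"
    by (simp add: fa_pow_fa_gen fa_mult_fa_mono)
  have "sweedler (Suc n) (fa_mono (replicate i G @ replicate j X))
      = (formal_sum (Cs_expansion_index n j) (\<lambda>(ks, ws). concat (map (\<lambda>w. replicate i G @ w) ws)) :: 'k fa)"
    by (simp add: sweedler_monomial formal_sum_reindex[OF bij_betw_x_counts_factor_words])
  then show ?thesis
    using monomial by (simp add: sum_fa_prod_list_Cs_eq_formal_sum del: upt_Suc)
qed

end
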